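(* In the setting and notation of the context, for every $t\in\{1,\dots,n-1\}$, $$\textsf{ALG}_{t+1}\ \ge\ \beta_t\ \ge\ \frac{1}{\phi^2}\mathbb{E}[y_t]\ =\ \frac1\phi\,\alpha_t,$$ where $\textsf{ALG}_{t+1}$ is the expected value accepted by $\textsf{ALG}$ when run only on boxes $t+1,\dots,n$ (arriving in this order).
   Context: There are $n$ boxes arriving in order $1,2,\dots,n$; box $s$ contains an independent nonnegative value $v_s\sim F_s$ with finite expectation. $\phi=\frac{1+\sqrt5}{2}$. For each $t$, $y_t=\max_{s>t}v_s$ ($y_n=0$), $\alpha_t=\frac1\phi\mathbb{E}[y_t]$, and $\beta_t$ is the unique $x\ge0$ solving $\mathbb{E}[(y_t-\phi x)^+]=x$ (so $\alpha_n=\beta_n=0$). The algorithm $\textsf{ALG}$ scans the boxes in arrival order and accepts (and stops at) the first box $t$ whose realized value $\theta_t$ satisfies $\theta_t\ge\tau_t:=\max(\alpha_t,\beta_t)$; it receives $0$ if it accepts nothing. When $\textsf{ALG}$ is run only on boxes $t+1,\dots,n$, it uses the same thresholds $\tau_{t+1},\dots,\tau_n$. *)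

theory Defs
  imports "HOL-Probability.Probability"
begin

text \<open>Boxes are indexed 1..n; box s has value distribution F s (a probability
measure on the reals).\<close>

definition phi :: real where
  "phi = (1 + sqrt 5) / 2"

definition joint :: "(nat \<Rightarrow> real measure) \<Rightarrow> nat \<Rightarrow> (nat \<Rightarrow> real) measure" where
  "joint F n = PiM {1..n} F"

definition ymax :: "nat \<Rightarrow> nat \<Rightarrow> (nat \<Rightarrow> real) \<Rightarrow> real" where
  "ymax n t \<omega> = (if {t<..n} = {} then 0 else Max (\<omega> ` {t<..n}))"

definition Ey :: "(nat \<Rightarrow> real measure) \<Rightarrow> nat \<Rightarrow> nat \<Rightarrow> real" where
  "Ey F n t = (\<integral>\<omega>. ymax n t \<omega> \<partial>joint F n)"

definition alpha :: "(nat \<Rightarrow> real measure) \<Rightarrow> nat \<Rightarrow> nat \<Rightarrow> real" where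
  "alpha F n t = Ey F n t / phi"

definition beta :: "(nat \<Rightarrow> real measure) \<Rightarrow> nat \<Rightarrow> nat \<Rightarrow> real" where
  "beta F n t = (THE x. 0 \<le> x \<and>
      (\<integral>\<omega>. max 0 (ymax n t \<omega> - phi * x) \<partial>joint F n) = x)"

definition tau :: "(nat \<Rightarrow> real measure) \<Rightarrow> nat \<Rightarrow> nat \<Rightarrow> real" where
  "tau F n t = max (alpha F n t) (beta F n t)"

definition alg_reward :: "(nat \<Rightarrow> real measure) \<Rightarrow> nat \<Rightarrow> nat \<Rightarrow> (nat \<Rightarrow> real) \<Rightarrow> real" where
  "alg_reward F n t \<omega> =
     (if \<exists>s\<in>{t..n}. tau F n s \<le> \<omega> s
      then \<omega> (LEAST s. s \<in> {t..n} \<and> tau F n s \<le> \<omega> s) else 0)"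

definition ALG :: "(nat \<Rightarrow> real measure) \<Rightarrow> nat \<Rightarrow> nat \<Rightarrow> real" where
  "ALG F n t = (\<integral>\<omega>. alg_reward F n t \<omega> \<partial>joint F n)"

end

theory Submission
  imports Defs
begin

text \<open>
  The map \<open>x \<mapsto> E[(y\<^sub>t - \<phi> x)\<^sup>+]\<close> is continuous and antitone, so \<open>\<beta>\<^sub>t\<close> is its unique
  nonnegative fixed point and every \<open>x\<close> with \<open>x \<le> E[(y\<^sub>t - \<phi> x)\<^sup>+]\<close> lies below \<open>\<beta>\<^sub>t\<close>. Since
  \<open>E[(y\<^sub>t - \<phi> x)\<^sup>+] \<ge> E[y\<^sub>t] - \<phi> x\<close> and \<open>\<phi>\<^sup>2 = \<phi> + 1\<close>, the point \<open>x = E[y\<^sub>t]/\<phi>\<^sup>2\<close> is such an \<open>x\<close>.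

  The bound \<open>\<beta>\<^sub>t \<le> ALG\<^sub>t\<^sub>+\<^sub>1\<close> is proved by backward induction on \<open>t\<close>. Splitting
  \<open>y\<^sub>t = max v\<^sub>t\<^sub>+\<^sub>1 y\<^sub>t\<^sub>+\<^sub>1\<close> in the fixed-point equation gives
  \<open>\<beta>\<^sub>t \<le> E[(v\<^sub>t\<^sub>+\<^sub>1 - \<phi> \<beta>\<^sub>t)\<^sup>+] + \<beta>\<^sub>t\<^sub>+\<^sub>1\<close>, while conditioning on the first box,
  which is independent of the later ones, gives
  \<open>ALG\<^sub>t\<^sub>+\<^sub>1 = \<tau> (1 - p) + E[(v\<^sub>t\<^sub>+\<^sub>1 - \<tau>)\<^sup>+] + p ALG\<^sub>t\<^sub>+\<^sub>2\<close> with \<open>\<tau> = \<tau>\<^sub>t\<^sub>+\<^sub>1\<close> and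
  \<open>p = P[v\<^sub>t\<^sub>+\<^sub>1 < \<tau>]\<close>. The bound \<open>E[y\<^sub>t]/\<phi>\<^sup>2 \<le> \<beta>\<^sub>t\<close> makes \<open>\<tau> \<le> \<phi> \<beta>\<^sub>t\<close>, and \<open>\<beta>\<^sub>t\<^sub>+\<^sub>1\<close> is below
  both \<open>\<tau>\<close> and (by induction) \<open>ALG\<^sub>t\<^sub>+\<^sub>2\<close>; comparing the two expressions term by term
  finishes the step.
\<close>

lemma phi_squared: "phi\<^sup>2 = phi + 1"
  unfolding phi_def by (simp add: power2_eq_square field_simps)

lemma one_le_phi: "1 \<le> phi"
  unfolding phi_def by simp

lemma antimono_fixpoint_ex1:
  fixes f :: "real \<Rightarrow> real"
  assumes "antimono f" "continuous_on {0..} f" "0 \<le> f 0"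
  shows "\<exists>!x. 0 \<le> x \<and> f x = x"
proof (rule ex_ex1I)
  have "continuous_on {0..f 0} (\<lambda>x. f x - x)"
    by (intro continuous_on_diff continuous_on_id continuous_on_subset[OF assms(2)]) auto
  moreover have "f (f 0) - f 0 \<le> 0"
    using antimonoD[OF assms(1) assms(3)] by simp
  ultimately obtain x where "0 \<le> x" "f x - x = 0"
    using IVT2'[of "\<lambda>x. f x - x" "f 0" 0 0] assms(3) by auto
  then show "\<exists>x. 0 \<le> x \<and> f x = x" by auto
next
  fix x y assume "0 \<le> x \<and> f x = x" "0 \<le> y \<and> f y = y"
  then show "x = y"
    using antimonoD[OF assms(1), of x y] antimonoD[OF assms(1), of y x] by linarith
qed

lemma antimono_fixpoint_le:
  fixes f :: "real \<Rightarrow> real"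
  assumes "antimono f" "f b = b" "f x \<le> x"
  shows "b \<le> x"
  using antimonoD[OF assms(1), of x b] assms(2,3) by linarith

lemma antimono_fixpoint_ge:
  fixes f :: "real \<Rightarrow> real"
  assumes "antimono f" "f b = b" "x \<le> f x"
  shows "x \<le> b"
  using antimonoD[OF assms(1), of b x] assms(2,3) by linarith

lemma pos_part_le_of_le_max:
  fixes y a b c :: real
  assumes "y \<le> max a b"
  shows "max 0 (y - c) \<le> max 0 (a - c) + max 0 (b - c)"
  using assms by linarith

lemma abs_pos_part_diff_le:
  fixes y a b :: real
  shows "\<bar>max 0 (y - a) - max 0 (y - b)\<bar> \<le> \<bar>a - b\<bar>"
  by (simp add: max_def abs_if)

lemma abs_ymax_le: "\<bar>ymax n k \<omega>\<bar> \<le> (\<Sum>s\<in>{k<..n}. \<bar>\<omega> s\<bar>)"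
proof (cases "{k<..n} = {}")
  case True
  then show ?thesis by (simp add: ymax_def)
next
  case False
  then have "ymax n k \<omega> \<in> \<omega> ` {k<..n}"
    by (auto simp: ymax_def intro!: Max_in)
  then obtain s where "s \<in> {k<..n}" "ymax n k \<omega> = \<omega> s" by blast
  then show ?thesis
    using member_le_sum[of s "{k<..n}" "\<lambda>s. \<bar>\<omega> s\<bar>"] by simp
qed

lemma borel_measurable_ymax:
  assumes "\<And>s. s \<in> {k<..n} \<Longrightarrow> (\<lambda>\<omega>. \<omega> s) \<in> borel_measurable M"
  shows "ymax n k \<in> borel_measurable M"
  unfolding ymax_def[abs_def] using assms by (auto intro!: borel_measurable_Max)

lemma ymax_Suc_le:
  assumes "k < n" "0 \<le> \<omega> (Suc k)"
  shows "ymax n (Suc k) \<omega> \<le> ymax n k \<omega>"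
proof -
  have "{k<..n} = insert (Suc k) {Suc k<..n}" using assms(1) by auto
  then show ?thesis
    using assms(2) by (cases "{Suc k<..n} = {}") (auto simp: ymax_def)
qed

lemma ymax_le_max_Suc:
  assumes "k < n"
  shows "ymax n k \<omega> \<le> max (\<omega> (Suc k)) (ymax n (Suc k) \<omega>)"
proof -
  have "{k<..n} = insert (Suc k) {Suc k<..n}" using assms by auto
  then show ?thesis by (cases "{Suc k<..n} = {}") (auto simp: ymax_def)
qed

lemma alg_reward_beyond: "n < k \<Longrightarrow> alg_reward F n k \<omega> = 0"
  unfolding alg_reward_def by auto

lemma alg_reward_step:
  assumes "k \<le> n"
  shows "alg_reward F n k \<omega> =
    (if tau F n k \<le> \<omega> k then \<omega> k else alg_reward F n (Suc k) \<omega>)"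
proof (cases "tau F n k \<le> \<omega> k")
  case True
  then have "(LEAST s. s \<in> {k..n} \<and> tau F n s \<le> \<omega> s) = k"
    using assms by (intro Least_equality) auto
  then show ?thesis using True assms unfolding alg_reward_def by auto
next
  case False
  then have same: "(\<lambda>s. s \<in> {k..n} \<and> tau F n s \<le> \<omega> s) = (\<lambda>s. s \<in> {Suc k..n} \<and> tau F n s \<le> \<omega> s)"
    by (auto simp: fun_eq_iff Suc_le_eq order_le_less)
  show ?thesis using False unfolding alg_reward_def Bex_def same by simp
qed

lemma alg_reward_cong:
  assumes "\<And>s. s \<in> {k..n} \<Longrightarrow> \<omega> s = \<omega>' s"
  shows "alg_reward F n k \<omega> = alg_reward F n k \<omega>'"
  using assms
proof (induction "Suc n - k" arbitrary: k)
  case 0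
  then show ?case by (simp add: alg_reward_beyond)
next
  case (Suc d)
  then show ?case by (simp add: alg_reward_step)
qed

lemma borel_measurable_alg_reward:
  assumes "\<And>s. s \<in> {k..n} \<Longrightarrow> (\<lambda>\<omega>. \<omega> s) \<in> borel_measurable M"
  shows "alg_reward F n k \<in> borel_measurable M"
  using assms
proof (induction "Suc n - k" arbitrary: k)
  case 0
  then show ?case by (simp add: alg_reward_beyond)
next
  case (Suc d)
  then have "k \<le> n" "(\<lambda>\<omega>. \<omega> k) \<in> borel_measurable M"
    "alg_reward F n (Suc k) \<in> borel_measurable M"
    by auto
  moreover have "alg_reward F n k = (\<lambda>\<omega>. if tau F n k \<le> \<omega> k then \<omega> k else alg_reward F n (Suc k) \<omega>)"
    using \<open>k \<le> n\<close> by (simp add: fun_eq_iff alg_reward_step)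
  ultimately show ?case by simp measurable
qed

lemma abs_alg_reward_le: "\<bar>alg_reward F n k \<omega>\<bar> \<le> (\<Sum>s\<in>{k..n}. \<bar>\<omega> s\<bar>)"
proof (induction "Suc n - k" arbitrary: k)
  case 0
  then show ?case by (simp add: alg_reward_beyond)
next
  case (Suc d)
  then have "k \<le> n" "\<bar>alg_reward F n (Suc k) \<omega>\<bar> \<le> (\<Sum>s\<in>{Suc k..n}. \<bar>\<omega> s\<bar>)" by auto
  moreover from \<open>k \<le> n\<close> have "{k..n} = insert k {Suc k..n}" by auto
  ultimately show ?case by (simp add: alg_reward_step sum_nonneg add_increasing)
qed

locale box_model =
  fixes F :: "nat \<Rightarrow> real measure" and n :: nat
  assumes prob_space_F: "\<And>s. s \<in> {1..n} \<Longrightarrow> prob_space (F s)"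
    and sets_F: "\<And>s. s \<in> {1..n} \<Longrightarrow> sets (F s) = sets borel"
    and AE_F_nonneg: "\<And>s. s \<in> {1..n} \<Longrightarrow> AE x in F s. 0 \<le> x"
    and integrable_F: "\<And>s. s \<in> {1..n} \<Longrightarrow> integrable (F s) (\<lambda>x. x)"
begin

sublocale joint: prob_space "joint F n"
  unfolding joint_def by (rule prob_space_PiM) (rule prob_space_F)

lemma measurable_coord: "s \<in> {1..n} \<Longrightarrow> (\<lambda>\<omega>. \<omega> s) \<in> measurable (joint F n) (F s)"
  unfolding joint_def by (rule measurable_component_singleton)

lemma borel_measurable_coord: "s \<in> {1..n} \<Longrightarrow> (\<lambda>\<omega>. \<omega> s) \<in> borel_measurable (joint F n)"
  using measurable_coord measurable_cong_sets[OF refl sets_F] by blast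

lemma integrable_coord: "s \<in> {1..n} \<Longrightarrow> integrable (joint F n) (\<lambda>\<omega>. \<omega> s)"
  using integrable_distr_eq[OF measurable_coord, of s "\<lambda>x. x"] distr_PiM_component[of "{1..n}" F s]
    prob_space_F integrable_F sets_F measurable_cong_sets[OF sets_F refl]
  by (simp add: joint_def)

lemma AE_coords_nonneg: "AE \<omega> in joint F n. \<forall>s\<in>{1..n}. 0 \<le> \<omega> s"
  unfolding joint_def
  by (intro AE_finite_allI AE_PiM_component prob_space_F AE_F_nonneg) auto

lemma integrable_sum_abs_coords:
  "{a..b} \<subseteq> {1..n} \<Longrightarrow> integrable (joint F n) (\<lambda>\<omega>. \<Sum>s\<in>{a..b}. \<bar>\<omega> s\<bar>)"
  by (intro Bochner_Integration.integrable_sum integrable_abs integrable_coord) auto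

lemma integrable_ymax: "integrable (joint F n) (ymax n k)"
proof (rule Bochner_Integration.integrable_bound[OF integrable_sum_abs_coords])
  show "ymax n k \<in> borel_measurable (joint F n)"
    by (intro borel_measurable_ymax borel_measurable_coord) auto
  have "{k<..n} = {Suc k..n}" by auto
  then show "AE \<omega> in joint F n. norm (ymax n k \<omega>) \<le> norm (\<Sum>s\<in>{Suc k..n}. \<bar>\<omega> s\<bar>)"
    using abs_ymax_le[of n k] by (simp add: sum_nonneg)
qed auto

lemma integrable_alg_reward: "1 \<le> k \<Longrightarrow> integrable (joint F n) (alg_reward F n k)"
proof (rule Bochner_Integration.integrable_bound[OF integrable_sum_abs_coords])
  assume "1 \<le> k"
  then show "{k..n} \<subseteq> {1..n}" "alg_reward F n k \<in> borel_measurable (joint F n)"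
    by (auto intro!: borel_measurable_alg_reward borel_measurable_coord)
  show "AE \<omega> in joint F n. norm (alg_reward F n k \<omega>) \<le> norm (\<Sum>s\<in>{k..n}. \<bar>\<omega> s\<bar>)"
    using abs_alg_reward_le[of F n k] by (simp add: sum_nonneg)
qed

lemma integrable_pos_part_coord:
  "s \<in> {1..n} \<Longrightarrow> integrable (joint F n) (\<lambda>\<omega>. max 0 (\<omega> s - c))"
  by (intro integrable_max Bochner_Integration.integrable_diff integrable_coord) auto

definition excess :: "nat \<Rightarrow> real \<Rightarrow> real" where
  "excess k x = (\<integral>\<omega>. max 0 (ymax n k \<omega> - phi * x) \<partial>joint F n)"

lemma integrable_pos_part_ymax: "integrable (joint F n) (\<lambda>\<omega>. max 0 (ymax n k \<omega> - phi * x))"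
  by (intro integrable_max Bochner_Integration.integrable_diff integrable_ymax) auto

lemma excess_nonneg: "0 \<le> excess k x"
  unfolding excess_def by (rule integral_nonneg_AE) auto

lemma antimono_excess: "antimono (excess k)"
proof (rule antimonoI)
  fix x x' :: real assume "x \<le> x'"
  then have "phi * x \<le> phi * x'" using one_le_phi by simp
  then show "excess k x' \<le> excess k x"
    unfolding excess_def
    by (intro integral_mono integrable_pos_part_ymax max.mono) auto
qed

lemma lipschitz_excess: "phi-lipschitz_on A (excess k)"
proof (rule lipschitz_onI)
  fix x x' :: real
  have "\<bar>phi * x - phi * x'\<bar> = phi * \<bar>x - x'\<bar>"
    using one_le_phi by (simp add: abs_mult flip: right_diff_distrib)
  then have pointwise: "\<bar>max 0 (y - phi * x) - max 0 (y - phi * x')\<bar> \<le> phi * \<bar>x - x'\<bar>" for y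
    using abs_pos_part_diff_le[of y "phi * x" "phi * x'"] by simp
  note integrable_parts = integrable_pos_part_ymax[of k x] integrable_pos_part_ymax[of k x']
  have "\<bar>excess k x - excess k x'\<bar>
      = \<bar>\<integral>\<omega>. max 0 (ymax n k \<omega> - phi * x) - max 0 (ymax n k \<omega> - phi * x') \<partial>joint F n\<bar>"
    unfolding excess_def using integrable_parts by simp
  also have "\<dots> \<le> (\<integral>\<omega>. \<bar>max 0 (ymax n k \<omega> - phi * x) - max 0 (ymax n k \<omega> - phi * x')\<bar> \<partial>joint F n)"
    by (rule integral_abs_bound)
  also have "\<dots> \<le> (\<integral>\<omega>. phi * \<bar>x - x'\<bar> \<partial>joint F n)"
    using pointwise integrable_parts by (intro integral_mono) auto
  finally show "dist (excess k x) (excess k x') \<le> phi * dist x x'"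
    by (simp add: dist_real_def joint.prob_space)
qed (use one_le_phi in simp)

lemma beta_eq_excess_fixpoint: "beta F n k = (THE x. 0 \<le> x \<and> excess k x = x)"
  unfolding beta_def excess_def ..

lemma beta_fixpoint: "0 \<le> beta F n k" "excess k (beta F n k) = beta F n k"
proof -
  have "\<exists>!x. 0 \<le> x \<and> excess k x = x"
    using antimono_excess lipschitz_on_continuous_on[OF lipschitz_excess] excess_nonneg
    by (rule antimono_fixpoint_ex1)
  from theI'[OF this] show "0 \<le> beta F n k" "excess k (beta F n k) = beta F n k"
    unfolding beta_eq_excess_fixpoint by auto
qed

lemma beta_le: "excess k x \<le> x \<Longrightarrow> beta F n k \<le> x"
  by (rule antimono_fixpoint_le[OF antimono_excess beta_fixpoint(2)])

lemma ge_beta: "x \<le> excess k x \<Longrightarrow> x \<le> beta F n k"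
  by (rule antimono_fixpoint_ge[OF antimono_excess beta_fixpoint(2)])

lemma Ey_div_phi_squared_le_beta: "Ey F n k / phi\<^sup>2 \<le> beta F n k"
proof (rule ge_beta)
  let ?x = "Ey F n k / phi\<^sup>2"
  have "?x = Ey F n k - phi * ?x"
    using one_le_phi phi_squared by (simp add: field_simps power2_eq_square)
  also have "\<dots> = (\<integral>\<omega>. ymax n k \<omega> - phi * ?x \<partial>joint F n)"
    unfolding Ey_def by (simp add: integrable_ymax joint.prob_space)
  also have "\<dots> \<le> excess k ?x"
    unfolding excess_def by (intro integral_mono integrable_pos_part_ymax) (auto intro: integrable_ymax)
  finally show "?x \<le> excess k ?x" .
qed

lemma Ey_Suc_le: "k < n \<Longrightarrow> Ey F n (Suc k) \<le> Ey F n k"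
  unfolding Ey_def using AE_coords_nonneg
  by (intro integral_mono_AE integrable_ymax) (auto elim!: eventually_mono intro!: ymax_Suc_le)

lemma excess_Suc_le: "k < n \<Longrightarrow> excess (Suc k) x \<le> excess k x"
  unfolding excess_def using AE_coords_nonneg
  by (intro integral_mono_AE integrable_pos_part_ymax)
     (elim eventually_mono, intro max.mono diff_right_mono ymax_Suc_le, auto)

lemma excess_le_first_box:
  assumes "k < n"
  shows "excess k x \<le> (\<integral>\<omega>. max 0 (\<omega> (Suc k) - phi * x) \<partial>joint F n) + excess (Suc k) x"
proof -
  have "excess k x \<le> (\<integral>\<omega>. max 0 (\<omega> (Suc k) - phi * x) + max 0 (ymax n (Suc k) \<omega> - phi * x) \<partial>joint F n)"
    unfolding excess_def using assms
    by (intro integral_mono Bochner_Integration.integrable_add integrable_pos_part_ymax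
        integrable_pos_part_coord pos_part_le_of_le_max ymax_le_max_Suc) auto
  also have "\<dots> = (\<integral>\<omega>. max 0 (\<omega> (Suc k) - phi * x) \<partial>joint F n) + excess (Suc k) x"
    unfolding excess_def using assms
    by (intro Bochner_Integration.integral_add integrable_pos_part_coord integrable_pos_part_ymax) auto
  finally show ?thesis .
qed

lemma beta_Suc_le: "k < n \<Longrightarrow> beta F n (Suc k) \<le> beta F n k"
  using excess_Suc_le beta_fixpoint(2) by (intro beta_le) metis

lemma beta_le_first_box:
  assumes "k < n"
  shows "beta F n k \<le> (\<integral>\<omega>. max 0 (\<omega> (Suc k) - phi * beta F n k) \<partial>joint F n) + beta F n (Suc k)"
proof -
  have "beta F n k = excess k (beta F n k)" using beta_fixpoint(2) by simp
  also have "\<dots> \<le> (\<integral>\<omega>. max 0 (\<omega> (Suc k) - phi * beta F n k) \<partial>joint F n) + excess (Suc k) (beta F n k)"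
    using assms by (rule excess_le_first_box)
  also have "excess (Suc k) (beta F n k) \<le> excess (Suc k) (beta F n (Suc k))"
    using assms by (intro antimonoD[OF antimono_excess] beta_Suc_le)
  also have "\<dots> = beta F n (Suc k)" by (rule beta_fixpoint(2))
  finally show ?thesis by simp
qed

lemma tau_Suc_le_phi_beta:
  assumes "k < n"
  shows "tau F n (Suc k) \<le> phi * beta F n k"
proof -
  have "alpha F n (Suc k) \<le> Ey F n k / phi"
    unfolding alpha_def using Ey_Suc_le[OF assms] one_le_phi by (simp add: divide_right_mono)
  also have "\<dots> = phi * (Ey F n k / phi\<^sup>2)"
    using one_le_phi by (simp add: power2_eq_square)
  also have "\<dots> \<le> phi * beta F n k"
    using one_le_phi by (intro mult_left_mono Ey_div_phi_squared_le_beta) simp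
  finally have "alpha F n (Suc k) \<le> phi * beta F n k" .
  moreover have "beta F n k \<le> phi * beta F n k"
    using mult_right_mono[OF one_le_phi beta_fixpoint(1)] by simp
  with beta_Suc_le[OF assms] have "beta F n (Suc k) \<le> phi * beta F n k"
    by (rule order_trans)
  ultimately show ?thesis by (simp add: tau_def)
qed

lemma indep_coords: "1 \<le> n \<Longrightarrow> joint.indep_vars (\<lambda>_. borel) (\<lambda>i \<omega>. \<omega> i) {1..n}"
proof -
  assume "1 \<le> n"
  have "sets (PiM {1..n} (\<lambda>_. borel)) = sets (joint F n)"
    unfolding joint_def by (rule sets_PiM_cong) (use sets_F in auto)
  then have "distr (joint F n) (PiM {1..n} (\<lambda>_. borel)) (\<lambda>\<omega>. \<lambda>i\<in>{1..n}. \<omega> i)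
      = distr (joint F n) (joint F n) (\<lambda>\<omega>. \<omega>)"
    by (intro distr_cong) (auto simp: joint_def space_PiM)
  moreover have "PiM {1..n} (\<lambda>i. distr (joint F n) borel (\<lambda>\<omega>. \<omega> i)) = joint F n"
    unfolding joint_def
  proof (rule PiM_cong)
    fix i assume "i \<in> {1..n}"
    then show "distr (PiM {1..n} F) borel (\<lambda>\<omega>. \<omega> i) = F i"
      using distr_cong[OF refl sets_F[symmetric], of i "PiM {1..n} F" "\<lambda>\<omega>. \<omega> i"]
        distr_PiM_component[of "{1..n}" F i] prob_space_F by simp
  qed simp
  ultimately show ?thesis
    using \<open>1 \<le> n\<close> by (subst joint.indep_vars_iff_distr_eq_PiM') (auto intro: borel_measurable_coord)
qed

lemma ALG_beyond: "ALG F n (Suc n) = 0"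
  by (simp add: ALG_def alg_reward_beyond)

lemma beta_last: "beta F n n = 0"
proof -
  have "excess n 0 = 0" unfolding excess_def ymax_def by simp
  then show ?thesis using beta_le[of n 0] beta_fixpoint(1)[of n] by simp
qed

definition reject :: "nat \<Rightarrow> (nat \<Rightarrow> real) \<Rightarrow> real" where
  "reject s \<omega> = (if tau F n s \<le> \<omega> s then 0 else 1)"

lemma integrable_reject: "s \<in> {1..n} \<Longrightarrow> integrable (joint F n) (reject s)"
proof (rule Bochner_Integration.integrable_bound[of _ "\<lambda>_. 1::real"])
  assume "s \<in> {1..n}"
  then have [measurable]: "(\<lambda>\<omega>. \<omega> s) \<in> borel_measurable (joint F n)"
    by (rule borel_measurable_coord)
  show "reject s \<in> borel_measurable (joint F n)"
    unfolding reject_def[abs_def] by measurable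
qed (auto simp: reject_def)

lemma integral_reject_times_alg_reward:
  assumes "s \<in> {1..n}"
  shows "(\<integral>\<omega>. reject s \<omega> * alg_reward F n (Suc s) \<omega> \<partial>joint F n)
       = (\<integral>\<omega>. reject s \<omega> \<partial>joint F n) * ALG F n (Suc s)"
proof -
  let ?B = "{Suc s..n}"
  have "joint.indep_var (PiM {s} (\<lambda>_. borel)) (\<lambda>\<omega>. restrict \<omega> {s})
                        (PiM ?B (\<lambda>_. borel)) (\<lambda>\<omega>. restrict \<omega> ?B)"
    using assms by (intro joint.indep_var_restrict[OF indep_coords]) auto
  moreover have "reject s \<in> borel_measurable (PiM {s} (\<lambda>_. borel))"
    using measurable_component_singleton[of s "{s}" "\<lambda>_. borel::real measure"]
    unfolding reject_def[abs_def] by measurable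
  moreover have "alg_reward F n (Suc s) \<in> borel_measurable (PiM ?B (\<lambda>_. borel))"
    by (intro borel_measurable_alg_reward measurable_component_singleton)
  ultimately have "joint.indep_var borel (reject s \<circ> (\<lambda>\<omega>. restrict \<omega> {s}))
      borel (alg_reward F n (Suc s) \<circ> (\<lambda>\<omega>. restrict \<omega> ?B))"
    by (rule joint.indep_var_compose)
  moreover have "reject s \<circ> (\<lambda>\<omega>. restrict \<omega> {s}) = reject s"
    "alg_reward F n (Suc s) \<circ> (\<lambda>\<omega>. restrict \<omega> ?B) = alg_reward F n (Suc s)"
    by (auto simp: fun_eq_iff reject_def intro: alg_reward_cong)
  ultimately show ?thesis
    unfolding ALG_def using assms
    by (intro joint.indep_var_lebesgue_integral integrable_reject integrable_alg_reward) auto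
qed

text \<open>An accepted box \<open>s\<close> pays \<open>\<tau>\<^sub>s + (v\<^sub>s - \<tau>\<^sub>s)\<^sup>+\<close>, a rejected one passes on to box \<open>s + 1\<close>,
  which is independent of box \<open>s\<close>.\<close>

lemma ALG_first_step:
  assumes "s \<in> {1..n}"
  defines "p \<equiv> \<integral>\<omega>. reject s \<omega> \<partial>joint F n"
  shows "ALG F n s = tau F n s * (1 - p)
     + (\<integral>\<omega>. max 0 (\<omega> s - tau F n s) \<partial>joint F n) + p * ALG F n (Suc s)"
proof -
  let ?t = "tau F n s" and ?R = "alg_reward F n (Suc s)"
  have reward: "alg_reward F n s
      = (\<lambda>\<omega>. (?t * (1 - reject s \<omega>) + max 0 (\<omega> s - ?t)) + reject s \<omega> * ?R \<omega>)"
    using assms alg_reward_step[of s n F] by (simp add: fun_eq_iff reject_def)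
  have int_R: "integrable (joint F n) ?R"
    using assms(1) by (intro integrable_alg_reward) auto
  note int_first = integrable_reject[OF assms(1)] integrable_pos_part_coord[OF assms(1)]
  have int_rest: "integrable (joint F n) (\<lambda>\<omega>. reject s \<omega> * ?R \<omega>)"
  proof (rule Bochner_Integration.integrable_bound)
    show "integrable (joint F n) (\<lambda>\<omega>. \<bar>?R \<omega>\<bar>)" using int_R by (rule integrable_abs)
    show "(\<lambda>\<omega>. reject s \<omega> * ?R \<omega>) \<in> borel_measurable (joint F n)"
      using borel_measurable_integrable[OF integrable_reject[OF assms(1)]]
        borel_measurable_integrable[OF int_R]
      by (rule borel_measurable_times)
    show "AE \<omega> in joint F n. norm (reject s \<omega> * ?R \<omega>) \<le> norm \<bar>?R \<omega>\<bar>"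
      by (simp add: reject_def)
  qed
  have "ALG F n s = (\<integral>\<omega>. ?t * (1 - reject s \<omega>) + max 0 (\<omega> s - ?t) \<partial>joint F n)
      + (\<integral>\<omega>. reject s \<omega> * ?R \<omega> \<partial>joint F n)"
    unfolding ALG_def reward using int_first int_rest by simp
  also have "(\<integral>\<omega>. ?t * (1 - reject s \<omega>) + max 0 (\<omega> s - ?t) \<partial>joint F n)
      = ?t * (1 - p) + (\<integral>\<omega>. max 0 (\<omega> s - ?t) \<partial>joint F n)"
    using int_first by (simp add: p_def joint.prob_space)
  also have "(\<integral>\<omega>. reject s \<omega> * ?R \<omega> \<partial>joint F n) = p * ALG F n (Suc s)"
    unfolding p_def using assms(1) by (rule integral_reject_times_alg_reward)
  finally show ?thesis .
qed

lemma beta_le_ALG: "k \<le> n \<Longrightarrow> beta F n k \<le> ALG F n (Suc k)"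
proof (induction "n - k" arbitrary: k)
  case 0
  then show ?case using beta_last ALG_beyond by simp
next
  case (Suc d)
  then have "k < n" and IH: "beta F n (Suc k) \<le> ALG F n (Suc (Suc k))" by auto
  define b where "b = beta F n k"
  define t where "t = tau F n (Suc k)"
  define p where "p = (\<integral>\<omega>. reject (Suc k) \<omega> \<partial>joint F n)"
  have s: "Suc k \<in> {1..n}" using \<open>k < n\<close> by auto
  have "0 \<le> p" "p \<le> 1"
    unfolding p_def using integral_mono[OF integrable_reject[OF s], of "\<lambda>_. 1"]
    by (auto intro!: integral_nonneg_AE simp: reject_def joint.prob_space)
  have "beta F n (Suc k) \<le> t" unfolding t_def tau_def by simp
  have "b \<le> (\<integral>\<omega>. max 0 (\<omega> (Suc k) - phi * b) \<partial>joint F n) + beta F n (Suc k)"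
    unfolding b_def using \<open>k < n\<close> by (rule beta_le_first_box)
  also have "\<dots> \<le> (\<integral>\<omega>. max 0 (\<omega> (Suc k) - t) \<partial>joint F n) + beta F n (Suc k)"
    using tau_Suc_le_phi_beta[OF \<open>k < n\<close>] unfolding b_def t_def
    by (intro add_right_mono integral_mono integrable_pos_part_coord[OF s] max.mono) auto
  also have "beta F n (Suc k) \<le> t * (1 - p) + p * ALG F n (Suc (Suc k))"
    using mult_left_mono[OF IH \<open>0 \<le> p\<close>] mult_left_mono[OF \<open>beta F n (Suc k) \<le> t\<close>, of "1 - p"] \<open>p \<le> 1\<close>
    by (simp add: algebra_simps)
  also have "(\<integral>\<omega>. max 0 (\<omega> (Suc k) - t) \<partial>joint F n) + (t * (1 - p) + p * ALG F n (Suc (Suc k)))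
      = ALG F n (Suc k)"
    unfolding t_def p_def using ALG_first_step[OF s] by simp
  finally show ?case unfolding b_def by simp
qed

end

theorem lemma3p2:
  fixes F :: "nat \<Rightarrow> real measure" and n t :: nat
  assumes prob: "\<And>s. s \<in> {1..n} \<Longrightarrow> prob_space (F s)"
    and borel: "\<And>s. s \<in> {1..n} \<Longrightarrow> sets (F s) = sets borel"
    and nonneg: "\<And>s. s \<in> {1..n} \<Longrightarrow> AE x in F s. 0 \<le> x"
    and finexp: "\<And>s. s \<in> {1..n} \<Longrightarrow> integrable (F s) (\<lambda>x. x)"
    and t: "1 \<le> t" "t \<le> n - 1"
  shows "ALG F n (t + 1) \<ge> beta F n t
       \<and> beta F n t \<ge> Ey F n t / phi\<^sup>2
       \<and> Ey F n t / phi\<^sup>2 = alpha F n t / phi"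
proof -
  interpret box_model F n
    using prob borel nonneg finexp by (rule box_model.intro)
  have "t \<le> n" using t by simp
  then show ?thesis
    using beta_le_ALG Ey_div_phi_squared_le_beta by (simp add: alpha_def power2_eq_square)
qed

end
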